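(* In the setting described in the context, for all $\alpha,\beta\in(0,\infty)$ with $\alpha>\beta$ and all $t\ge0$: if $L^{(\alpha)}_{t\infty}>0$ then $L^{(\beta)}_{t\infty}=\infty$, whereas if $L^{(\beta)}_{t\infty}<\infty$ then $L^{(\alpha)}_{t\infty}=0$.
   Context: Let $(\Omega,\mathcal F,\mathbb P)$ be a probability space with a filtration $\{\mathcal F_t\}_{t\ge0}$ satisfying the usual conditions; (in)equalities between random variables hold a.s. A pricing kernel is an $\{\mathcal F_t\}$-adapted càdlàg semimartingale $\{\pi_t\}_{t\ge0}$ with (a) $\pi_t>0$, (b) $\mathbb E[\pi_t]<\infty$ for all $t\ge0$, (c) $\liminf_{t\to\infty}\mathbb E[\pi_t]=0$. Fix such a pricing kernel and set $P_{tT}=\pi_t^{-1}\mathbb E[\pi_T\mid\mathcal F_t]$ for $0\le t<T$. For $\lambda>0$, the tail-Pareto rate $L^{(\lambda)}_{tT}$ is defined by $P_{tT}=\left[1+\lambda^{-1}(T-t)L^{(\lambda)}_{tT}\right]^{-\lambda}$, i.e. $L^{(\lambda)}_{tT}=\lambda(T-t)^{-1}(P_{tT}^{-1/\lambda}-1)$. For a family $\{A_x\}_{x\in\mathbb R^+}$ of $\mathcal F_t$-measurable extended-real random variables, $\limsup_{x\to\infty}A_x:=\operatorname{ess\,inf}_{x}\operatorname{ess\,sup}_{y\ge x}A_y$, with essential supremum/infimum taken among $\mathcal F_t$-measurable random variables. The long tail-Pareto rate is $L^{(\lambda)}_{t\infty}=\limsup_{T\to\infty}L^{(\lambda)}_{tT}$.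 *)

theory Defs
  imports "HOL-Probability.Probability"
begin

definition filtration_usual :: "'a measure \<Rightarrow> (real \<Rightarrow> 'a measure) \<Rightarrow> bool" where
  "filtration_usual M F \<longleftrightarrow>
     (\<forall>t\<ge>0. subalgebra M (F t)) \<and>
     (\<forall>s t. 0 \<le> s \<and> s \<le> t \<longrightarrow> sets (F s) \<subseteq> sets (F t)) \<and>
     (\<forall>t\<ge>0. sets (F t) = (\<Inter>s\<in>{t<..}. sets (F s))) \<and>
     (\<forall>A\<in>null_sets M. A \<in> sets (F 0))"

definition cadlag :: "(real \<Rightarrow> real) \<Rightarrow> bool" where
  "cadlag f \<longleftrightarrow> (\<forall>t\<ge>0. continuous (at_right t) f \<and> (t > 0 \<longrightarrow> (\<exists>l. (f \<longlongrightarrow> l) (at_left t))))"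

text \<open>Pricing kernel (the semimartingale requirement is not formalized).\<close>
definition pricing_kernel :: "'a measure \<Rightarrow> (real \<Rightarrow> 'a measure) \<Rightarrow> (real \<Rightarrow> 'a \<Rightarrow> real) \<Rightarrow> bool" where
  "pricing_kernel M F \<pi> \<longleftrightarrow>
     (\<forall>t\<ge>0. \<pi> t \<in> borel_measurable (F t)) \<and>
     (\<forall>\<omega>\<in>space M. cadlag (\<lambda>t. \<pi> t \<omega>)) \<and>
     (\<forall>t\<ge>0. AE \<omega> in M. \<pi> t \<omega> > 0) \<and>
     (\<forall>t\<ge>0. integrable M (\<pi> t)) \<and>
     Liminf at_top (\<lambda>t. ereal (integral\<^sup>L M (\<pi> t))) = 0"

definition bond_price :: "'a measure \<Rightarrow> (real \<Rightarrow> 'a measure) \<Rightarrow> (real \<Rightarrow> 'a \<Rightarrow> real) \<Rightarrow> real \<Rightarrow> real \<Rightarrow> 'a \<Rightarrow> real" where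
  "bond_price M F \<pi> t T \<omega> = real_cond_exp M (F t) (\<pi> T) \<omega> / \<pi> t \<omega>"

definition tail_pareto_rate :: "'a measure \<Rightarrow> (real \<Rightarrow> 'a measure) \<Rightarrow> (real \<Rightarrow> 'a \<Rightarrow> real) \<Rightarrow> real \<Rightarrow> real \<Rightarrow> real \<Rightarrow> 'a \<Rightarrow> ereal" where
  "tail_pareto_rate M F \<pi> lam t T \<omega> =
     ereal (lam / (T - t) * (bond_price M F \<pi> t T \<omega> powr (-1 / lam) - 1))"

definition is_ess_sup :: "'a measure \<Rightarrow> 'a measure \<Rightarrow> 'i set \<Rightarrow> ('i \<Rightarrow> 'a \<Rightarrow> ereal) \<Rightarrow> ('a \<Rightarrow> ereal) \<Rightarrow> bool" where
  "is_ess_sup M N I A Z \<longleftrightarrow> Z \<in> borel_measurable N \<and> (\<forall>i\<in>I. AE \<omega> in M. A i \<omega> \<le> Z \<omega>) \<and>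
     (\<forall>Z'. Z' \<in> borel_measurable N \<and> (\<forall>i\<in>I. AE \<omega> in M. A i \<omega> \<le> Z' \<omega>) \<longrightarrow> (AE \<omega> in M. Z \<omega> \<le> Z' \<omega>))"

definition is_ess_inf :: "'a measure \<Rightarrow> 'a measure \<Rightarrow> 'i set \<Rightarrow> ('i \<Rightarrow> 'a \<Rightarrow> ereal) \<Rightarrow> ('a \<Rightarrow> ereal) \<Rightarrow> bool" where
  "is_ess_inf M N I A Z \<longleftrightarrow> Z \<in> borel_measurable N \<and> (\<forall>i\<in>I. AE \<omega> in M. Z \<omega> \<le> A i \<omega>) \<and>
     (\<forall>Z'. Z' \<in> borel_measurable N \<and> (\<forall>i\<in>I. AE \<omega> in M. Z' \<omega> \<le> A i \<omega>) \<longrightarrow> (AE \<omega> in M. Z' \<omega> \<le> Z \<omega>))"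

definition ess_sup_rv :: "'a measure \<Rightarrow> 'a measure \<Rightarrow> 'i set \<Rightarrow> ('i \<Rightarrow> 'a \<Rightarrow> ereal) \<Rightarrow> 'a \<Rightarrow> ereal" where
  "ess_sup_rv M N I A = (SOME Z. is_ess_sup M N I A Z)"

definition ess_inf_rv :: "'a measure \<Rightarrow> 'a measure \<Rightarrow> 'i set \<Rightarrow> ('i \<Rightarrow> 'a \<Rightarrow> ereal) \<Rightarrow> 'a \<Rightarrow> ereal" where
  "ess_inf_rv M N I A = (SOME Z. is_ess_inf M N I A Z)"

definition ess_limsup :: "'a measure \<Rightarrow> 'a measure \<Rightarrow> real set \<Rightarrow> (real \<Rightarrow> 'a \<Rightarrow> ereal) \<Rightarrow> 'a \<Rightarrow> ereal" where
  "ess_limsup M N S A = ess_inf_rv M N S (\<lambda>x. ess_sup_rv M N {y\<in>S. x \<le> y} A)"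

text \<open>Long tail-Pareto rate L^(\<lambda>)_{t\<infinity>}; T ranges over (t,\<infinity>), where L_tT is defined.\<close>
definition long_tail_pareto_rate :: "'a measure \<Rightarrow> (real \<Rightarrow> 'a measure) \<Rightarrow> (real \<Rightarrow> 'a \<Rightarrow> real) \<Rightarrow> real \<Rightarrow> real \<Rightarrow> 'a \<Rightarrow> ereal" where
  "long_tail_pareto_rate M F \<pi> lam t =
     ess_limsup M (F t) {t<..} (\<lambda>T. tail_pareto_rate M F \<pi> lam t T)"

end

theory Submission
  imports Defs
begin

text \<open>
  Write u = P_tT^(-1/\<alpha>), so that L^(\<alpha>)_tT = \<alpha> (u - 1) / (T - t) and
  L^(\<beta>)_tT = \<beta> (u^(\<alpha>/\<beta>) - 1) / (T - t). Since \<alpha>/\<beta> > 1, a bound L^(\<beta>)_tT < K forces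
  u = O((T - t)^(\<beta>/\<alpha>)) and hence L^(\<alpha>)_tT \<le> \<epsilon> for all large T. So on the event where the
  essential supremum of L^(\<beta>) over some tail T \<ge> x is finite, L^(\<alpha>)_t\<infinity> \<le> 0; and u \<ge> 0 gives
  L^(\<alpha>)_tT \<ge> -\<alpha>/(T - t), so L^(\<alpha>)_t\<infinity> \<ge> 0 everywhere.

  The essential suprema exist because a family of measurable extended-real functions is
  dominated a.e. by the supremum of a countable subfamily: take a countable subfamily that
  maximises the expectation of arctan of its supremum.
\<close>

definition arctan_ereal :: "ereal \<Rightarrow> real" where
  "arctan_ereal x =
     (if x = \<infinity> then pi/2 else if x = -\<infinity> then -(pi/2) else arctan (real_of_ereal x))"

lemma arctan_ereal_measurable[measurable]: "arctan_ereal \<in> borel_measurable borel"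
  unfolding arctan_ereal_def by measurable

lemma abs_arctan_ereal_le: "\<bar>arctan_ereal x\<bar> \<le> pi/2"
  using arctan_bounded[of "real_of_ereal x"] unfolding arctan_ereal_def by (auto simp: abs_if)

lemma strict_mono_arctan_ereal: "strict_mono arctan_ereal"
proof
  fix x y :: ereal assume "x < y"
  then show "arctan_ereal x < arctan_ereal y"
    using arctan_bounded[of "real_of_ereal x"] arctan_bounded[of "real_of_ereal y"]
    by (cases x; cases y) (auto simp: arctan_ereal_def arctan_less_iff)
qed

lemma countable_subset_maximiser:
  fixes v :: "'i set \<Rightarrow> real"
  assumes mono: "\<And>J K. countable K \<Longrightarrow> K \<subseteq> I \<Longrightarrow> J \<subseteq> K \<Longrightarrow> v J \<le> v K"
    and bounded: "\<And>J. countable J \<Longrightarrow> J \<subseteq> I \<Longrightarrow> v J \<le> B"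
  shows "\<exists>J. countable J \<and> J \<subseteq> I \<and> (\<forall>K. countable K \<and> J \<subseteq> K \<and> K \<subseteq> I \<longrightarrow> v K = v J)"
proof -
  define \<C> where "\<C> = {J. countable J \<and> J \<subseteq> I}"
  define c where "c = (SUP J\<in>\<C>. v J)"
  have \<C>_ne: "\<C> \<noteq> {}" using \<C>_def by blast
  have bdd: "bdd_above (v ` \<C>)" using bounded unfolding \<C>_def by (intro bdd_aboveI[of _ B]) blast
  have le_c: "v J \<le> c" if "J \<in> \<C>" for J
    unfolding c_def using that bdd by (rule cSUP_upper)
  have "\<exists>J\<in>\<C>. c - 1 / Suc n < v J" for n :: nat
  proof -
    have "c - 1 / Suc n < c" by simp
    then show ?thesis unfolding c_def by (subst (asm) less_cSUP_iff[OF \<C>_ne bdd])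
  qed
  then obtain Jn where Jn: "\<And>n. Jn n \<in> \<C>" "\<And>n. c - 1 / Suc n < v (Jn n)" by metis
  define J where "J = (\<Union>n. Jn n)"
  have J: "countable J" "J \<subseteq> I" using Jn(1) unfolding J_def \<C>_def by auto
  have "c \<le> v J"
  proof (rule field_le_epsilon)
    fix e :: real assume "0 < e"
    then obtain n :: nat where "1 / Suc n < e" using nat_approx_posE by blast
    moreover have "v (Jn n) \<le> v J" using mono[OF J] unfolding J_def by blast
    ultimately show "c \<le> v J + e" using Jn(2)[of n] by linarith
  qed
  have "v K = v J" if K: "countable K" "J \<subseteq> K" "K \<subseteq> I" for K
  proof -
    have "v J \<le> v K" using mono[OF K(1,3,2)] .
    moreover have "v K \<le> c" using K by (intro le_c) (simp add: \<C>_def)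
    ultimately show "v K = v J" using \<open>c \<le> v J\<close> by linarith
  qed
  with J show ?thesis by blast
qed

lemma (in finite_measure) integrable_arctan_ereal:
  assumes "X \<in> borel_measurable M"
  shows "integrable M (\<lambda>\<omega>. arctan_ereal (X \<omega>))"
proof (rule integrable_const_bound[where B="pi/2"])
  show "AE \<omega> in M. norm (arctan_ereal (X \<omega>)) \<le> pi/2"
    unfolding real_norm_def by (intro AE_I2 abs_arctan_ereal_le)
qed (rule measurable_compose[OF assms arctan_ereal_measurable])

lemma (in prob_space) countable_SUP_dominates:
  fixes A :: "'i \<Rightarrow> 'a \<Rightarrow> ereal"
  assumes sub: "subalgebra M N" and meas: "\<And>i. i \<in> I \<Longrightarrow> A i \<in> borel_measurable N"
  shows "\<exists>J. countable J \<and> J \<subseteq> I \<and> (\<forall>i\<in>I. AE \<omega> in M. A i \<omega> \<le> (SUP j\<in>J. A j \<omega>))"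
proof -
  define f where "f J \<omega> = arctan_ereal (SUP j\<in>J. A j \<omega>)" for J \<omega>
  have f_mono: "f J \<omega> \<le> f K \<omega>" if "J \<subseteq> K" for J K \<omega>
    unfolding f_def using that
    by (simp add: strict_mono_less_eq[OF strict_mono_arctan_ereal] SUP_subset_mono)
  have int: "integrable M (f J)" if "countable J" "J \<subseteq> I" for J
    unfolding f_def using that meas
    by (intro integrable_arctan_ereal measurable_from_subalg[OF sub] borel_measurable_SUP) auto
  define v where "v J = integral\<^sup>L M (f J)" for J
  have v_mono: "v J \<le> v K" if "countable K" "K \<subseteq> I" "J \<subseteq> K" for J K
    unfolding v_def using that countable_subset[OF that(3)] by (intro integral_mono int f_mono) auto
  have v_bounded: "v J \<le> pi/2" if "countable J" "J \<subseteq> I" for J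
    unfolding v_def by (rule integral_le_const[OF int[OF that] AE_I2])
      (unfold f_def, use abs_arctan_ereal_le abs_le_iff in blast)
  have "\<exists>J. countable J \<and> J \<subseteq> I \<and> (\<forall>K. countable K \<and> J \<subseteq> K \<and> K \<subseteq> I \<longrightarrow> v K = v J)"
    using v_mono v_bounded by (rule countable_subset_maximiser)
  then obtain J where J: "countable J" "J \<subseteq> I"
    and max: "\<forall>K. countable K \<and> J \<subseteq> K \<and> K \<subseteq> I \<longrightarrow> v K = v J"
    by blast
  \<comment> \<open>adding any \<open>A i\<close> to the maximiser \<open>J\<close> leaves \<open>E[arctan (SUP J A)]\<close> unchanged, so the two
     suprema agree a.e.\<close>
  have dom: "\<forall>i\<in>I. AE \<omega> in M. A i \<omega> \<le> (SUP j\<in>J. A j \<omega>)"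
  proof
    fix i assume i: "i \<in> I"
    have iJ: "countable (insert i J)" "insert i J \<subseteq> I" using J i by auto
    have "AE \<omega> in M. f J \<omega> = f (insert i J) \<omega>"
    proof (rule integral_eq_mono_AE_eq_AE)
      have "v (insert i J) = v J" using max iJ by blast
      then show "integral\<^sup>L M (f J) = integral\<^sup>L M (f (insert i J))" by (simp add: v_def)
      show "AE \<omega> in M. f J \<omega> \<le> f (insert i J) \<omega>" by (intro AE_I2 f_mono) (rule subset_insertI)
    qed (use J iJ in \<open>auto intro: int\<close>)
    then show "AE \<omega> in M. A i \<omega> \<le> (SUP j\<in>J. A j \<omega>)"
    proof eventually_elim
      case (elim \<omega>)
      then have "(SUP j\<in>J. A j \<omega>) = (SUP j\<in>insert i J. A j \<omega>)"
        unfolding f_def by (simp add: strict_mono_eq[OF strict_mono_arctan_ereal])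
      then show ?case by (metis SUP_upper insertI1)
    qed
  qed
  with J show ?thesis by (intro exI[of _ J] conjI)
qed

lemma is_ess_sup_upper: "is_ess_sup M N I A Z \<Longrightarrow> i \<in> I \<Longrightarrow> AE \<omega> in M. A i \<omega> \<le> Z \<omega>"
  unfolding is_ess_sup_def by blast

lemma is_ess_sup_least:
  "is_ess_sup M N I A Z \<Longrightarrow> Z' \<in> borel_measurable N \<Longrightarrow> (\<And>i. i \<in> I \<Longrightarrow> AE \<omega> in M. A i \<omega> \<le> Z' \<omega>)
    \<Longrightarrow> AE \<omega> in M. Z \<omega> \<le> Z' \<omega>"
  unfolding is_ess_sup_def by blast

lemma is_ess_sup_measurable: "is_ess_sup M N I A Z \<Longrightarrow> Z \<in> borel_measurable N"
  unfolding is_ess_sup_def by blast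

lemma is_ess_inf_lower: "is_ess_inf M N I A Z \<Longrightarrow> i \<in> I \<Longrightarrow> AE \<omega> in M. Z \<omega> \<le> A i \<omega>"
  unfolding is_ess_inf_def by blast

lemma is_ess_inf_greatest:
  "is_ess_inf M N I A Z \<Longrightarrow> Z' \<in> borel_measurable N \<Longrightarrow> (\<And>i. i \<in> I \<Longrightarrow> AE \<omega> in M. Z' \<omega> \<le> A i \<omega>)
    \<Longrightarrow> AE \<omega> in M. Z' \<omega> \<le> Z \<omega>"
  unfolding is_ess_inf_def by blast

lemma is_ess_inf_measurable: "is_ess_inf M N I A Z \<Longrightarrow> Z \<in> borel_measurable N"
  unfolding is_ess_inf_def by blast

lemma (in prob_space) is_ess_sup_ess_sup_rv:
  fixes A :: "'i \<Rightarrow> 'a \<Rightarrow> ereal"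
  assumes sub: "subalgebra M N" and meas: "\<And>i. i \<in> I \<Longrightarrow> A i \<in> borel_measurable N"
  shows "is_ess_sup M N I A (ess_sup_rv M N I A)"
proof -
  have "\<exists>J. countable J \<and> J \<subseteq> I \<and> (\<forall>i\<in>I. AE \<omega> in M. A i \<omega> \<le> (SUP j\<in>J. A j \<omega>))"
    by (rule countable_SUP_dominates[OF sub]) (rule meas)
  then obtain J where J: "countable J" "J \<subseteq> I"
    and dom: "\<forall>i\<in>I. AE \<omega> in M. A i \<omega> \<le> (SUP j\<in>J. A j \<omega>)"
    by blast
  have "is_ess_sup M N I A (\<lambda>\<omega>. SUP j\<in>J. A j \<omega>)"
    unfolding is_ess_sup_def
  proof (intro conjI allI impI ballI)
    show "(\<lambda>\<omega>. SUP j\<in>J. A j \<omega>) \<in> borel_measurable N"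
      using J meas by (intro borel_measurable_SUP) auto
    fix Z assume "Z \<in> borel_measurable N \<and> (\<forall>i\<in>I. AE \<omega> in M. A i \<omega> \<le> Z \<omega>)"
    then have "AE \<omega> in M. \<forall>j\<in>J. A j \<omega> \<le> Z \<omega>"
      using J by (subst AE_ball_countable[OF J(1)]) blast
    then show "AE \<omega> in M. (SUP j\<in>J. A j \<omega>) \<le> Z \<omega>"
      by eventually_elim (simp add: SUP_le_iff)
  qed (use dom in blast)
  then show ?thesis unfolding ess_sup_rv_def by (rule someI[where P="is_ess_sup M N I A"])
qed

lemma is_ess_inf_iff_is_ess_sup_uminus:
  "is_ess_inf M N I A Z \<longleftrightarrow> is_ess_sup M N I (\<lambda>i \<omega>. - A i \<omega>) (\<lambda>\<omega>. - Z \<omega>)"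
proof -
  have all_uminus: "(\<forall>Z'. P Z') \<longleftrightarrow> (\<forall>Z'. P (\<lambda>\<omega>. - Z' \<omega>))" for P :: "('a \<Rightarrow> ereal) \<Rightarrow> bool"
  proof
    assume "\<forall>Z'. P (\<lambda>\<omega>. - Z' \<omega>)"
    then have "P (\<lambda>\<omega>. - (- Z' \<omega>))" for Z' by (rule spec)
    then show "\<forall>Z'. P Z'" by simp
  qed simp
  show ?thesis
    unfolding is_ess_inf_def is_ess_sup_def
    by (subst all_uminus) (simp add: ereal_uminus_le_reorder)
qed

lemma (in prob_space) is_ess_inf_ess_inf_rv:
  fixes A :: "'i \<Rightarrow> 'a \<Rightarrow> ereal"
  assumes sub: "subalgebra M N" and meas: "\<And>i. i \<in> I \<Longrightarrow> A i \<in> borel_measurable N"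
  shows "is_ess_inf M N I A (ess_inf_rv M N I A)"
proof -
  have "is_ess_sup M N I (\<lambda>i \<omega>. - A i \<omega>) (ess_sup_rv M N I (\<lambda>i \<omega>. - A i \<omega>))"
    using meas by (intro is_ess_sup_ess_sup_rv[OF sub]) simp
  then have "is_ess_inf M N I A (\<lambda>\<omega>. - ess_sup_rv M N I (\<lambda>i \<omega>. - A i \<omega>) \<omega>)"
    by (simp add: is_ess_inf_iff_is_ess_sup_uminus)
  then show ?thesis unfolding ess_inf_rv_def by (rule someI[where P="is_ess_inf M N I A"])
qed

lemma is_ess_sup_le_on_event:
  assumes Z: "is_ess_sup M N I A Z" and P[measurable]: "Measurable.pred N P"
    and le: "\<And>i. i \<in> I \<Longrightarrow> AE \<omega> in M. P \<omega> \<longrightarrow> A i \<omega> \<le> c"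
  shows "AE \<omega> in M. P \<omega> \<longrightarrow> Z \<omega> \<le> c"
proof -
  note is_ess_sup_measurable[OF Z, measurable]
  have "AE \<omega> in M. Z \<omega> \<le> (if P \<omega> then c else Z \<omega>)"
  proof (rule is_ess_sup_least[OF Z])
    fix i assume i: "i \<in> I"
    from is_ess_sup_upper[OF Z i] le[OF i]
    show "AE \<omega> in M. A i \<omega> \<le> (if P \<omega> then c else Z \<omega>)" by eventually_elim auto
  qed measurable
  then show ?thesis by eventually_elim auto
qed

lemma is_ess_sup_nonneg:
  assumes Z: "is_ess_sup M N I A Z"
    and lower: "\<And>e. 0 < e \<Longrightarrow> \<exists>i\<in>I. AE \<omega> in M. - ereal e \<le> A i \<omega>"
  shows "AE \<omega> in M. 0 \<le> Z \<omega>"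
proof -
  have "AE \<omega> in M. - ereal (1 / Suc n) \<le> Z \<omega>" for n :: nat
  proof -
    obtain i where i: "i \<in> I" and "AE \<omega> in M. - ereal (1 / Suc n) \<le> A i \<omega>"
      using lower[of "1 / Suc n"] by auto
    from this(2) is_ess_sup_upper[OF Z i] show ?thesis by eventually_elim (rule order_trans)
  qed
  then have "AE \<omega> in M. \<forall>n::nat. - ereal (1 / Suc n) \<le> Z \<omega>"
    by (simp add: AE_all_countable)
  then show ?thesis
  proof eventually_elim
    case (elim \<omega>)
    show "0 \<le> Z \<omega>"
    proof (rule ereal_le_epsilon2)
      fix e :: real assume "0 < e"
      then obtain n :: nat where "1 / Suc n < e" using nat_approx_posE by blast
      then have "- ereal e \<le> - ereal (1 / Suc n)" by simp
      also have "\<dots> \<le> Z \<omega>" using elim by blast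
      finally have "- ereal e \<le> Z \<omega>" .
      then show "0 \<le> Z \<omega> + ereal e" by (cases "Z \<omega>") auto
    qed
  qed
qed

lemma eventually_pareto_rate_le_if_pareto_rate_less:
  fixes \<alpha> \<beta> \<epsilon> K :: real
  assumes "0 < \<beta>" "\<beta> < \<alpha>" "0 < \<epsilon>"
  shows "\<forall>\<^sub>F z in at_top. \<forall>p.
           \<beta> / z * (p powr (-1/\<beta>) - 1) < K \<longrightarrow> \<alpha> / z * (p powr (-1/\<alpha>) - 1) \<le> \<epsilon>"
proof -
  define c where "c = 1 + max K 1 / \<beta>"
  have c: "0 < c" unfolding c_def using assms by (simp add: add_pos_nonneg)
  have \<alpha>: "0 < \<alpha>" using assms by simp
  \<comment> \<open>a bound \<open>K\<close> on the \<open>\<beta>\<close>-rate gives \<open>p powr (-1/\<alpha>) < (c z) powr (\<beta>/\<alpha>)\<close>, and \<open>\<beta>/\<alpha> < 1\<close>\<close>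
  have "((\<lambda>z. z powr (\<beta>/\<alpha> - 1)) \<longlongrightarrow> 0) at_top"
    using assms by (intro tendsto_neg_powr filterlim_ident) simp
  then have "\<forall>\<^sub>F z in at_top. z powr (\<beta>/\<alpha> - 1) < \<epsilon> / (\<alpha> * c powr (\<beta>/\<alpha>))"
    using assms \<alpha> c by (intro order_tendstoD(2)) auto
  moreover have "\<forall>\<^sub>F z in at_top. (1::real) \<le> z" by (rule eventually_ge_at_top)
  ultimately show ?thesis
  proof eventually_elim
    case (elim z)
    show ?case
    proof (intro allI impI)
      fix p assume "\<beta> / z * (p powr (-1/\<beta>) - 1) < K"
      then have "p powr (-1/\<beta>) < 1 + K * z / \<beta>"
        using elim assms by (simp add: field_simps)
      also have "\<dots> \<le> z + max K 1 * z / \<beta>"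
        using elim assms by (intro add_mono divide_right_mono mult_right_mono) auto
      also have "\<dots> = c * z"
        unfolding c_def using assms by (simp add: field_simps)
      finally have "(p powr (-1/\<beta>)) powr (\<beta>/\<alpha>) < (c * z) powr (\<beta>/\<alpha>)"
        using assms by (intro powr_less_mono2) auto
      then have p: "p powr (-1/\<alpha>) < (c * z) powr (\<beta>/\<alpha>)"
        using assms by (simp add: powr_powr)
      have "\<alpha> / z * (p powr (-1/\<alpha>) - 1) \<le> \<alpha> / z * (c * z) powr (\<beta>/\<alpha>)"
        using p \<alpha> elim by (intro mult_left_mono) auto
      also have "\<dots> = \<alpha> * c powr (\<beta>/\<alpha>) * z powr (\<beta>/\<alpha> - 1)"
        using c elim by (simp add: powr_mult powr_diff)
      also have "\<dots> \<le> \<epsilon>"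
        using elim \<alpha> c by (simp add: field_simps)
      finally show "\<alpha> / z * (p powr (-1/\<alpha>) - 1) \<le> \<epsilon>" .
    qed
  qed
qed

locale bond_price_curve = prob_space M for M :: "'a measure" +
  fixes N :: "'a measure" and t :: real and P :: "real \<Rightarrow> 'a \<Rightarrow> real"
  assumes subalgebra: "subalgebra M N"
    and measurable_P: "\<And>T. t < T \<Longrightarrow> P T \<in> borel_measurable N"
begin

definition rate :: "real \<Rightarrow> real \<Rightarrow> 'a \<Rightarrow> ereal" where
  "rate lam T \<omega> = ereal (lam / (T - t) * (P T \<omega> powr (-1/lam) - 1))"

definition tail_sup :: "real \<Rightarrow> real \<Rightarrow> 'a \<Rightarrow> ereal" where
  "tail_sup lam x = ess_sup_rv M N {T\<in>{t<..}. x \<le> T} (rate lam)"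

definition long_rate :: "real \<Rightarrow> 'a \<Rightarrow> ereal" where
  "long_rate lam = ess_limsup M N {t<..} (rate lam)"

lemma rate_measurable: "t < T \<Longrightarrow> rate lam T \<in> borel_measurable N"
  using measurable_P unfolding rate_def by measurable

text \<open>\<open>powr\<close> is nonnegative even at junk arguments, so no positivity of \<open>P\<close> is needed.\<close>
lemma rate_lower_bound: "t < T \<Longrightarrow> 0 < lam \<Longrightarrow> - ereal (lam / (T - t)) \<le> rate lam T \<omega>"
  unfolding rate_def by (simp add: field_simps)

lemma is_ess_sup_tail_sup: "is_ess_sup M N {T\<in>{t<..}. x \<le> T} (rate lam) (tail_sup lam x)"
  unfolding tail_sup_def using subalgebra by (intro is_ess_sup_ess_sup_rv rate_measurable) auto

lemma is_ess_inf_long_rate: "is_ess_inf M N {t<..} (tail_sup lam) (long_rate lam)"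
  unfolding long_rate_def ess_limsup_def tail_sup_def[symmetric] using subalgebra
  by (intro is_ess_inf_ess_inf_rv is_ess_sup_measurable[OF is_ess_sup_tail_sup])

lemma long_rate_nonneg:
  assumes "0 < lam"
  shows "AE \<omega> in M. 0 \<le> long_rate lam \<omega>"
proof (rule is_ess_inf_greatest[OF is_ess_inf_long_rate])
  fix x assume x: "x \<in> {t<..}"
  show "AE \<omega> in M. 0 \<le> tail_sup lam x \<omega>"
  proof (rule is_ess_sup_nonneg[OF is_ess_sup_tail_sup])
    fix e :: real assume e: "0 < e"
    define T where "T = x + lam / e"
    have "0 < lam / e" using assms e by simp
    then have T: "t < T" "x \<le> T" using x unfolding T_def by auto
    have "lam / (T - t) \<le> lam / (lam / e)"
      using \<open>0 < lam / e\<close> x assms unfolding T_def by (intro divide_left_mono mult_pos_pos) auto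
    also have "\<dots> = e" using assms by simp
    finally have "lam / (T - t) \<le> e" .
    then have "- ereal e \<le> - ereal (lam / (T - t))" by simp
    then have "- ereal e \<le> rate lam T \<omega>" for \<omega>
      using rate_lower_bound[OF T(1) assms] by (rule order_trans)
    with T show "\<exists>T\<in>{T\<in>{t<..}. x \<le> T}. AE \<omega> in M. - ereal e \<le> rate lam T \<omega>" by auto
  qed
qed simp

lemma long_rate_le_if_tail_sup_less:
  assumes "0 < \<beta>" "\<beta> < \<alpha>" "0 < \<epsilon>" "t < x"
  shows "AE \<omega> in M. tail_sup \<beta> x \<omega> < ereal K \<longrightarrow> long_rate \<alpha> \<omega> \<le> ereal \<epsilon>"
proof -
  obtain X where X: "\<And>z p. X \<le> z \<Longrightarrow>
      \<beta> / z * (p powr (-1/\<beta>) - 1) < K \<Longrightarrow> \<alpha> / z * (p powr (-1/\<alpha>) - 1) \<le> \<epsilon>"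
    using eventually_pareto_rate_le_if_pareto_rate_less[OF assms(1-3), of K]
    unfolding eventually_at_top_linorder by blast
  define x' where "x' = max x (t + X)"
  have x': "t < x'" "x \<le> x'" using assms unfolding x'_def by auto
  have [measurable]: "tail_sup \<beta> x \<in> borel_measurable N"
    by (rule is_ess_sup_measurable[OF is_ess_sup_tail_sup])
  have "AE \<omega> in M. tail_sup \<beta> x \<omega> < ereal K \<longrightarrow> tail_sup \<alpha> x' \<omega> \<le> ereal \<epsilon>"
  proof (rule is_ess_sup_le_on_event[OF is_ess_sup_tail_sup])
    fix T assume T: "T \<in> {T\<in>{t<..}. x' \<le> T}"
    then have "T \<in> {T\<in>{t<..}. x \<le> T}" "X \<le> T - t" using x' unfolding x'_def by auto
    from is_ess_sup_upper[OF is_ess_sup_tail_sup[of x \<beta>] this(1)]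
    show "AE \<omega> in M. tail_sup \<beta> x \<omega> < ereal K \<longrightarrow> rate \<alpha> T \<omega> \<le> ereal \<epsilon>"
    proof eventually_elim
      case (elim \<omega>)
      show ?case
      proof
        assume "tail_sup \<beta> x \<omega> < ereal K"
        with elim have "rate \<beta> T \<omega> < ereal K" by (rule le_less_trans)
        then show "rate \<alpha> T \<omega> \<le> ereal \<epsilon>"
          using X[OF \<open>X \<le> T - t\<close>] unfolding rate_def by simp
      qed
    qed
  qed measurable
  moreover have "AE \<omega> in M. long_rate \<alpha> \<omega> \<le> tail_sup \<alpha> x' \<omega>"
    using x' by (intro is_ess_inf_lower[OF is_ess_inf_long_rate]) simp
  ultimately show ?thesis by eventually_elim auto
qed

lemma long_rate_nonpos_if_tail_sup_finite:
  assumes "0 < \<beta>" "\<beta> < \<alpha>" "t < x"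
  shows "AE \<omega> in M. tail_sup \<beta> x \<omega> < \<infinity> \<longrightarrow> long_rate \<alpha> \<omega> \<le> 0"
proof -
  have "AE \<omega> in M. tail_sup \<beta> x \<omega> < ereal n \<longrightarrow> long_rate \<alpha> \<omega> \<le> ereal (1 / Suc m)"
    for n m :: nat
    using assms by (intro long_rate_le_if_tail_sup_less) auto
  then have "AE \<omega> in M. \<forall>(n::nat) (m::nat).
      tail_sup \<beta> x \<omega> < ereal n \<longrightarrow> long_rate \<alpha> \<omega> \<le> ereal (1 / Suc m)"
    unfolding AE_all_countable by simp
  then show ?thesis
  proof eventually_elim
    case (elim \<omega>)
    show ?case
    proof
      assume "tail_sup \<beta> x \<omega> < \<infinity>"
      then obtain n :: nat where n: "tail_sup \<beta> x \<omega> < ereal n"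
        using less_PInf_Ex_of_nat by auto
      show "long_rate \<alpha> \<omega> \<le> 0"
      proof (rule ereal_le_epsilon2)
        fix e :: real assume "0 < e"
        then obtain m :: nat where "1 / Suc m < e" using nat_approx_posE by blast
        then have "long_rate \<alpha> \<omega> \<le> ereal e"
          using elim n by (meson ereal_less_eq(3) less_imp_le order_trans)
        then show "long_rate \<alpha> \<omega> \<le> 0 + ereal e" by simp
      qed
    qed
  qed
qed

text \<open>The lower bound \<open>if 0 < long_rate \<alpha> then \<infinity> else -\<infinity>\<close> of all tail suprema of the
  \<open>\<beta>\<close>-rate is \<open>N\<close>-measurable, so it also bounds their essential infimum.\<close>
lemma long_rate_pos_imp_infinite:
  assumes "0 < \<beta>" "\<beta> < \<alpha>"
  shows "AE \<omega> in M. 0 < long_rate \<alpha> \<omega> \<longrightarrow> long_rate \<beta> \<omega> = \<infinity>"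
proof -
  have [measurable]: "long_rate \<alpha> \<in> borel_measurable N"
    by (rule is_ess_inf_measurable[OF is_ess_inf_long_rate])
  have "AE \<omega> in M. (if 0 < long_rate \<alpha> \<omega> then \<infinity> else -\<infinity>) \<le> long_rate \<beta> \<omega>"
  proof (rule is_ess_inf_greatest[OF is_ess_inf_long_rate])
    fix x assume "x \<in> {t<..}"
    with long_rate_nonpos_if_tail_sup_finite[OF assms]
    have "AE \<omega> in M. tail_sup \<beta> x \<omega> < \<infinity> \<longrightarrow> long_rate \<alpha> \<omega> \<le> 0" by simp
    then show "AE \<omega> in M. (if 0 < long_rate \<alpha> \<omega> then \<infinity> else -\<infinity>) \<le> tail_sup \<beta> x \<omega>"
      by eventually_elim (auto simp: not_less)
  qed measurable
  then show ?thesis by eventually_elim (auto simp: top_unique)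
qed

lemma long_rate_dichotomy:
  assumes "0 < \<beta>" "\<beta> < \<alpha>"
  shows "((AE \<omega> in M. 0 < long_rate \<alpha> \<omega>) \<longrightarrow> (AE \<omega> in M. long_rate \<beta> \<omega> = \<infinity>))
       \<and> ((AE \<omega> in M. long_rate \<beta> \<omega> < \<infinity>) \<longrightarrow> (AE \<omega> in M. long_rate \<alpha> \<omega> = 0))"
proof (intro conjI impI)
  assume "AE \<omega> in M. 0 < long_rate \<alpha> \<omega>"
  with long_rate_pos_imp_infinite[OF assms] show "AE \<omega> in M. long_rate \<beta> \<omega> = \<infinity>"
    by eventually_elim simp
next
  assume "AE \<omega> in M. long_rate \<beta> \<omega> < \<infinity>"
  moreover have "AE \<omega> in M. 0 \<le> long_rate \<alpha> \<omega>" using assms by (intro long_rate_nonneg) simp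
  moreover note long_rate_pos_imp_infinite[OF assms]
  ultimately show "AE \<omega> in M. long_rate \<alpha> \<omega> = 0"
  proof eventually_elim
    case (elim \<omega>)
    then have "long_rate \<alpha> \<omega> \<le> 0" by (auto simp: not_less[symmetric])
    then show ?case using elim(2) by (rule order.antisym)
  qed
qed

end

theorem proposition4:
  fixes M :: "'a measure" and F :: "real \<Rightarrow> 'a measure" and \<pi> :: "real \<Rightarrow> 'a \<Rightarrow> real"
    and \<alpha> \<beta> t :: real
  assumes "prob_space M"
    and "filtration_usual M F"
    and "pricing_kernel M F \<pi>"
    and "0 < \<beta>" and "\<beta> < \<alpha>" and "0 \<le> t"
  shows "((AE \<omega> in M. long_tail_pareto_rate M F \<pi> \<alpha> t \<omega> > 0) \<longrightarrow>
            (AE \<omega> in M. long_tail_pareto_rate M F \<pi> \<beta> t \<omega> = \<infinity>))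
       \<and> ((AE \<omega> in M. long_tail_pareto_rate M F \<pi> \<beta> t \<omega> < \<infinity>) \<longrightarrow>
            (AE \<omega> in M. long_tail_pareto_rate M F \<pi> \<alpha> t \<omega> = 0))"
proof -
  interpret prob_space M by fact
  have sub: "subalgebra M (F t)" using assms(2,6) unfolding filtration_usual_def by blast
  have [measurable]: "\<pi> t \<in> borel_measurable (F t)"
    using assms(3,6) unfolding pricing_kernel_def by blast
  have [measurable]: "real_cond_exp M (F t) f \<in> borel_measurable (F t)" for f
    by (rule borel_measurable_cond_exp)
  have "bond_price M F \<pi> t T \<in> borel_measurable (F t)" for T
    unfolding bond_price_def by measurable
  with sub interpret bond_price_curve M "F t" t "bond_price M F \<pi> t"
    by unfold_locales
  have long_rate_eq: "long_tail_pareto_rate M F \<pi> lam t = long_rate lam" for lam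
    unfolding long_tail_pareto_rate_def long_rate_def tail_pareto_rate_def rate_def ..
  show ?thesis unfolding long_rate_eq by (rule long_rate_dichotomy[OF assms(4,5)])
qed

end
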